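(* Assume $\Phi^{y,\dagger}\in L^1_{\mu_\theta}$ and $\Phi^{y,\mathrm{enh}}\in L^1_{\mu_\theta}$. Then $$\max\{d_{\mathrm{KL}}(\mu^{y,\dagger}_\theta\Vert\mu^{y,\mathrm{enh}}_\theta),d_{\mathrm{KL}}(\mu^{y,\mathrm{enh}}_\theta\Vert\mu^{y,\dagger}_\theta)\}\le C\Big(\Big\|\,|\mathcal{O}(\delta^\dagger-m_E)|^2_{\Sigma_\varepsilon^{-1}}\Big\|^{1/2}_{L^1_{\mu_\theta}}+\Big\|\,|y-\mathcal{O}\mathcal{M}-\mathcal{O}m_E|^2_{\Sigma_\varepsilon^{-1}-(\Sigma_\varepsilon+\Gamma_E)^{-1}}\Big\|_{L^1_{\mu_\theta}}\Big)$$ with $C=\exp\big(2\|\Phi^{y,\dagger}\|_{L^1_{\mu_\theta}}+2\|\Phi^{y,\mathrm{enh}}\|_{L^1_{\mu_\theta}}\big)\max\Big\{\sqrt2\big(\|\Phi^{y,\dagger}\|^{1/2}_{L^1_{\mu_\theta}}+C_{\mathrm{enh}}\|\Phi^{y,\mathrm{enh}}\|^{1/2}_{L^1_{\mu_\theta}}\big),1\Big\}$.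
   Context: Let $\Theta$ be a Borel subset of a separable Banach space and $\mu_\theta$ a Borel probability measure on $\Theta$. Let $\mathcal{U}$ be a Banach space, $n\in\mathbb{N}$, $\mathcal{O}:\mathcal{U}\to\mathbb{R}^n$ continuous linear, $\mathcal{M}^\dagger,\mathcal{M}:\Theta\to\mathcal{U}$ measurable, $\delta^\dagger:=\mathcal{M}^\dagger-\mathcal{M}$. Let $\Sigma_\varepsilon\in\mathbb{R}^{n\times n}$ be symmetric positive definite and $y\in\mathbb{R}^n$ fixed. For symmetric positive semidefinite $L$, $|a|_L:=(a^\top La)^{1/2}$, and for symmetric $A,B$ write $|a|^2_{A-B}:=a^\top Aa-a^\top Ba$. Fix $m_E\in\mathcal{U}$ and a covariance operator $\Sigma_E$ of a Gaussian measure on $\mathcal{U}$; $\Gamma_E:=\mathcal{O}\Sigma_E\mathcal{O}^*$ is symmetric positive semidefinite. Misfits: $\Phi^{y,\dagger}(\theta')=\tfrac12|y-\mathcal{O}\mathcal{M}^\dagger(\theta')|^2_{\Sigma_\varepsilon^{-1}}$, $\Phi^{y,\mathrm{enh}}(\theta')=\tfrac12|y-\mathcal{O}\mathcal{M}(\theta')-\mathcal{O}m_E|^2_{(\Sigma_\varepsilon+\Gamma_E)^{-1}}$. $C_{\mathrm{enh}}:=\|\Sigma_\varepsilon^{-1/2}(\Sigma_\varepsilon+\Gamma_E)^{1/2}\|_{\mathrm{op}}$. For a probability measure $\mu$ and measurable $\Phi\ge0$, $\mu_\Phi$ has density $\exp(-\Phi)/\int\exp(-\Phi)d\mu$ w.r.t.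 $\mu$. $\mu^{y,\dagger}_\theta:=(\mu_\theta)_{\Phi^{y,\dagger}}$, $\mu^{y,\mathrm{enh}}_\theta:=(\mu_\theta)_{\Phi^{y,\mathrm{enh}}}$. $d_{\mathrm{KL}}(\mu\Vert\nu)=\int\log\frac{d\mu}{d\nu}d\mu$ if $\mu\ll\nu$, $+\infty$ otherwise. *)

theory Defs
  imports "HOL-Analysis.Analysis" "HOL-Probability.Probability"
begin

definition sym_mat :: "real^'n^'n \<Rightarrow> bool" where
  "sym_mat A \<longleftrightarrow> transpose A = A"

definition spd :: "real^'n^'n \<Rightarrow> bool" where
  "spd A \<longleftrightarrow> sym_mat A \<and> (\<forall>x. x \<noteq> 0 \<longrightarrow> x \<bullet> (A *v x) > 0)"

definition spsd :: "real^'n^'n \<Rightarrow> bool" where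
  "spsd A \<longleftrightarrow> sym_mat A \<and> (\<forall>x. x \<bullet> (A *v x) \<ge> 0)"

definition sqrtm :: "real^'n^'n \<Rightarrow> real^'n^'n" where
  "sqrtm A = (THE R. spsd R \<and> R ** R = A)"

definition wsq :: "real^'n^'n \<Rightarrow> real^'n \<Rightarrow> real" where
  "wsq L a = a \<bullet> (L *v a)"

definition wsq_diff :: "real^'n^'n \<Rightarrow> real^'n^'n \<Rightarrow> real^'n \<Rightarrow> real" where
  "wsq_diff A B a = a \<bullet> (A *v a) - a \<bullet> (B *v a)"

definition reweight :: "'a measure \<Rightarrow> ('a \<Rightarrow> real) \<Rightarrow> 'a measure" where
  "reweight \<mu> \<Phi> = density \<mu> (\<lambda>x. ennreal (exp (- \<Phi> x) / (\<integral>t. exp (- \<Phi> t) \<partial>\<mu>)))"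

text \<open>Kullback--Leibler divergence d_KL(mu || nu), extended-real valued:
  +infinity unless mu << nu; if log(dmu/dnu) is not mu-integrable the value is +infinity.\<close>
definition d_KL :: "'a measure \<Rightarrow> 'a measure \<Rightarrow> ereal" where
  "d_KL \<mu> \<nu> =
    (if absolutely_continuous \<nu> \<mu> \<and> sets \<mu> = sets \<nu> then
       (if integrable \<mu> (\<lambda>x. ln (enn2real (RN_deriv \<nu> \<mu> x)))
        then ereal (\<integral>x. ln (enn2real (RN_deriv \<nu> \<mu> x)) \<partial>\<mu>)
        else \<infinity>)
     else \<infinity>)"

definition L1norm :: "'a measure \<Rightarrow> ('a \<Rightarrow> real) \<Rightarrow> real" where
  "L1norm \<mu> f = (\<integral>x. \<bar>f x\<bar> \<partial>\<mu>)"

end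

theory Submission
  imports Defs
begin

text \<open>Whitening with the inverse square roots of \<open>\<Sigma>\<^sub>\<epsilon>\<close> and \<open>\<Sigma>\<^sub>\<epsilon> + \<Gamma>\<^sub>E\<close> turns
  the two potentials into \<open>|\<alpha>|\<^sup>2/2\<close> and \<open>|\<beta>|\<^sup>2/2\<close>; the residual
  \<open>y - O M - O m\<^sub>E\<close> whitened by \<open>\<Sigma>\<^sub>\<epsilon>\<close> alone gives a third vector \<open>\<gamma>\<close> with
  \<open>|\<beta>| \<le> |\<gamma>| \<le> C\<^sub>e\<^sub>n\<^sub>h |\<beta>|\<close>.
  For two Gibbs reweightings of a probability measure, Jensen's inequality for the normalising
  constant and the fact that \<open>exp (-s)\<close> is 1-Lipschitz on \<open>s \<ge> 0\<close> bound either KL divergence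
  by \<open>2 exp (\<integral>\<Phi>) \<integral>|\<Phi>\<^sub>1 - \<Phi>\<^sub>2|\<close>. Finally
  \<open>|\<alpha>|\<^sup>2 - |\<beta>|\<^sup>2 = (|\<alpha>|\<^sup>2 - |\<gamma>|\<^sup>2) + (|\<gamma>|\<^sup>2 - |\<beta>|\<^sup>2)\<close>: the first difference
  factors as \<open>(|\<alpha>| - |\<gamma>|)(|\<alpha>| + |\<gamma>|)\<close> and is controlled by Cauchy--Schwarz through the
  model error \<open>|\<gamma> - \<alpha>|\<^sup>2\<close>, while the second is exactly the integrand of the
  covariance-inflation term.\<close>

section \<open>Symmetric positive definite matrices\<close>

lemma sym_mat_inner_commute:
  fixes A :: "real^'n^'n"
  assumes "sym_mat A"
  shows "x \<bullet> (A *v y) = (A *v x) \<bullet> y"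
proof -
  have "(A *v x) \<bullet> y = (x v* A) \<bullet> y"
    using assms unfolding sym_mat_def by (metis transpose_matrix_vector)
  also have "\<dots> = x \<bullet> (A *v y)" by (rule dot_lmul_matrix)
  finally show ?thesis by simp
qed

lemma sym_matI:
  fixes A :: "real^'n^'n"
  assumes "\<And>x y. x \<bullet> (A *v y) = (A *v x) \<bullet> y"
  shows "sym_mat A"
proof -
  have "transpose A *v x = A *v x" for x
  proof -
    have "(transpose A *v x - A *v x) \<bullet> y = 0" for y
      using assms[of x y] dot_lmul_matrix[of x A y] by (simp add: inner_diff_left)
    from this[of "transpose A *v x - A *v x"] show ?thesis by simp
  qed
  then show ?thesis unfolding sym_mat_def by (simp add: matrix_eq)
qed

lemma invertible_iff_trivial_kernel:
  fixes A :: "real^'n^'n"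
  shows "invertible A \<longleftrightarrow> (\<forall>x. A *v x = 0 \<longrightarrow> x = 0)"
  by (simp add: invertible_left_inverse matrix_left_invertible_ker)

lemma matrix_inv_cancel:
  fixes A :: "real^'n^'n"
  assumes "invertible A"
  shows "A *v (matrix_inv A *v x) = x" "matrix_inv A *v (A *v x) = x"
proof -
  have "\<exists>A'. A ** A' = mat 1 \<and> A' ** A = mat 1" using assms unfolding invertible_def by blast
  from someI_ex[OF this] have "A ** matrix_inv A = mat 1" "matrix_inv A ** A = mat 1"
    unfolding matrix_inv_def by auto
  then show "A *v (matrix_inv A *v x) = x" "matrix_inv A *v (A *v x) = x"
    by (simp_all add: matrix_vector_mul_assoc)
qed

lemma sym_mat_matrix_inv_inner_commute:
  fixes A :: "real^'n^'n"
  assumes "sym_mat A" "invertible A"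
  shows "x \<bullet> (matrix_inv A *v y) = (matrix_inv A *v x) \<bullet> y"
  using sym_mat_inner_commute[OF assms(1), of "matrix_inv A *v x" "matrix_inv A *v y"]
  by (simp add: matrix_inv_cancel(1)[OF assms(2)])

lemma spd_invertible:
  fixes A :: "real^'n^'n"
  assumes "spd A" shows "invertible A"
  unfolding invertible_iff_trivial_kernel
proof safe
  fix x assume "A *v x = 0"
  then have "x \<bullet> (A *v x) = 0" by simp
  then show "x = 0" using assms unfolding spd_def by force
qed

lemma spd_add_spsd:
  fixes S G :: "real^'n^'n"
  assumes "spd S" "spsd G" shows "spd (S + G)"
proof -
  have "sym_mat (S + G)" using assms unfolding spd_def spsd_def sym_mat_def
    by (simp add: transpose_def vec_eq_iff)
  moreover have "x \<bullet> ((S + G) *v x) > 0" if "x \<noteq> 0" for x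
  proof -
    have "x \<bullet> (S *v x) > 0" "x \<bullet> (G *v x) \<ge> 0" using assms that unfolding spd_def spsd_def by auto
    then show ?thesis by (simp add: matrix_vector_mult_add_rdistrib inner_add_right)
  qed
  ultimately show ?thesis unfolding spd_def by auto
qed

text \<open>Expand \<open>(u - S\<^sup>-\<^sup>1 b)\<^sup>T S (u - S\<^sup>-\<^sup>1 b) \<ge> 0\<close>; equality holds at \<open>u = S\<^sup>-\<^sup>1 b\<close>.\<close>
lemma wsq_matrix_inv_ge:
  fixes S :: "real^'n^'n"
  assumes "spd S"
  shows "2 * (u \<bullet> b) - u \<bullet> (S *v u) \<le> wsq (matrix_inv S) b"
proof -
  have sym: "sym_mat S" and inv: "invertible S"
    using assms spd_invertible unfolding spd_def by auto
  define w where "w = matrix_inv S *v b"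
  have Sw: "S *v w = b" unfolding w_def by (rule matrix_inv_cancel(1)[OF inv])
  have "0 \<le> (u - w) \<bullet> (S *v (u - w))"
    using assms unfolding spd_def by (cases "u = w") (auto intro: less_imp_le)
  also have "\<dots> = u \<bullet> (S *v u) - 2 * (u \<bullet> b) + w \<bullet> b"
    using sym_mat_inner_commute[OF sym, of w u] Sw
    by (simp add: matrix_vector_mult_diff_distrib inner_diff_left inner_diff_right inner_commute)
  finally show ?thesis unfolding wsq_def w_def by (simp add: inner_commute)
qed

lemma wsq_matrix_inv_add_spsd_le:
  fixes S G :: "real^'n^'n"
  assumes S: "spd S" and G: "spsd G"
  shows "wsq (matrix_inv (S + G)) b \<le> wsq (matrix_inv S) b"
proof -
  have inv: "invertible (S + G)" by (rule spd_invertible[OF spd_add_spsd[OF S G]])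
  define u where "u = matrix_inv (S + G) *v b"
  have Su: "(S + G) *v u = b" unfolding u_def by (rule matrix_inv_cancel(1)[OF inv])
  have ub: "u \<bullet> b = u \<bullet> (S *v u) + u \<bullet> (G *v u)"
    by (simp add: Su[symmetric] matrix_vector_mult_add_rdistrib inner_add_right)
  have "wsq (matrix_inv (S + G)) b = u \<bullet> b"
    unfolding wsq_def u_def by (simp add: inner_commute)
  also have "\<dots> \<le> 2 * (u \<bullet> b) - u \<bullet> (S *v u)"
    using ub G unfolding spsd_def by simp
  also have "\<dots> \<le> wsq (matrix_inv S) b" by (rule wsq_matrix_inv_ge[OF S])
  finally show ?thesis .
qed

section \<open>Spectral theorem and matrix square roots\<close>

lemma quadratic_nonpos_imp_linear_coeff_zero:
  fixes b c :: real
  assumes "\<And>t. 2*t*b + t^2*c \<le> 0"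
  shows "b = 0"
proof -
  define k where "k = \<bar>c\<bar> + 1"
  have k: "k > 0" "2*k + c > 0" unfolding k_def by (auto simp: abs_if)
  have "(2*(b/k)*b + (b/k)^2*c) * k^2 \<le> 0"
    using assms[of "b/k"] k by (simp add: mult_nonpos_nonneg)
  also have "(2*(b/k)*b + (b/k)^2*c) * k^2 = b^2 * (2*k + c)" using k
    by (simp add: field_simps power2_eq_square)
  finally have "b^2 \<le> 0" using k by (simp add: mult_le_0_iff)
  then show ?thesis by simp
qed

lemma invariant_subspace_eigenvectorI:
  fixes A :: "real^'n^'n"
  assumes "subspace V" "\<forall>x\<in>V. A *v x \<in> V" "v \<in> V" and vv: "v \<bullet> v = 1"
    and orth: "\<And>u. u \<in> V \<Longrightarrow> u \<bullet> v = 0 \<Longrightarrow> u \<bullet> (A *v v) = 0"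
  shows "A *v v = (v \<bullet> (A *v v)) *\<^sub>R v"
proof -
  define w where "w = A *v v - (v \<bullet> (A *v v)) *\<^sub>R v"
  have wV: "w \<in> V" unfolding w_def using assms by (simp add: subspace_diff subspace_scale)
  have "v \<bullet> w = 0" unfolding w_def using vv by (simp add: inner_diff_right)
  then have wv: "w \<bullet> v = 0" by (simp add: inner_commute)
  have "w \<bullet> w = 0"
    using orth[OF wV wv] wv unfolding w_def by (simp add: inner_diff_right)
  then show ?thesis unfolding w_def by simp
qed

text \<open>A maximiser of the Rayleigh quotient on the unit sphere of an invariant subspace is an
  eigenvector: perturbing it within the subspace gives a quadratic in \<open>t\<close> that stays
  non-positive, so its linear coefficient vanishes.\<close>
lemma sym_mat_invariant_subspace_eigenvector:
  fixes A :: "real^'n^'n"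
  assumes sym: "sym_mat A" and sub: "subspace V" and inv: "\<forall>x\<in>V. A *v x \<in> V"
    and nontriv: "V \<noteq> {0}"
  obtains v where "v \<in> V" "norm v = 1" "A *v v = (v \<bullet> (A *v v)) *\<^sub>R v"
proof -
  obtain z where z: "z \<in> V" "z \<noteq> 0" using subspace_0[OF sub] nontriv by blast
  let ?S = "V \<inter> sphere 0 1"
  have cpt: "compact ?S" using closed_subspace[OF sub] by (intro closed_Int_compact) auto
  have "z /\<^sub>R norm z \<in> ?S" using z subspace_scale[OF sub] by auto
  then have ne: "?S \<noteq> {}" by blast
  have cont: "continuous_on ?S (\<lambda>x. x \<bullet> (A *v x))"
    by (intro continuous_intros linear_continuous_on linear_conv_bounded_linear[THEN iffD1]) auto
  obtain v where v: "v \<in> ?S" and vmax: "\<And>x. x \<in> ?S \<Longrightarrow> x \<bullet> (A *v x) \<le> v \<bullet> (A *v v)"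
    using continuous_attains_sup[OF cpt ne cont] by blast
  define l where "l = v \<bullet> (A *v v)"
  have vV: "v \<in> V" and nv: "norm v = 1" using v by auto
  have vv: "v \<bullet> v = 1" using nv by (simp add: norm_eq_1)
  have rayleigh: "x \<bullet> (A *v x) \<le> l * (x \<bullet> x)" if "x \<in> V" for x
  proof (cases "x = 0")
    case False
    let ?n = "norm x"
    have "x /\<^sub>R ?n \<in> ?S" using that subspace_scale[OF sub] False by auto
    then have "(x /\<^sub>R ?n) \<bullet> (A *v (x /\<^sub>R ?n)) \<le> l" using vmax l_def by blast
    then have "(x \<bullet> (A *v x)) / ?n^2 \<le> l"
      by (simp add: matrix_vector_mult_scaleR power2_eq_square divide_inverse mult_ac)
    then show ?thesis using False by (simp add: divide_le_eq power2_norm_eq_inner)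
  qed simp
  have orth: "u \<bullet> (A *v v) = 0" if u: "u \<in> V" "u \<bullet> v = 0" for u
  proof (rule quadratic_nonpos_imp_linear_coeff_zero)
    fix t :: real
    have w: "v + t *\<^sub>R u \<in> V" using u vV sub by (simp add: subspace_add subspace_scale)
    have "(v + t *\<^sub>R u) \<bullet> (A *v (v + t *\<^sub>R u))
        = l + 2*t*(u \<bullet> (A *v v)) + t^2 * (u \<bullet> (A *v u))"
      using sym_mat_inner_commute[OF sym, of v u]
      by (simp add: matrix_vector_right_distrib matrix_vector_mult_scaleR inner_add_left
          inner_add_right l_def power2_eq_square algebra_simps inner_commute)
    moreover have "(v + t *\<^sub>R u) \<bullet> (v + t *\<^sub>R u) = 1 + t^2 * (u \<bullet> u)"
      using vv u(2) by (simp add: inner_add_left inner_add_right power2_eq_square algebra_simps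
          inner_commute)
    ultimately show "2*t*(u \<bullet> (A *v v)) + t^2*((u \<bullet> (A *v u)) - l * (u \<bullet> u)) \<le> 0"
      using rayleigh[OF w] by (simp add: algebra_simps)
  qed
  show thesis
    using that[OF vV nv] invariant_subspace_eigenvectorI[OF sub inv vV vv orth] by blast
qed

lemma span_insert_orthogonal_complement:
  fixes v :: "'a::real_inner"
  assumes "subspace V" "v \<in> V" "v \<bullet> v = 1" "span B = {u \<in> V. u \<bullet> v = 0}"
  shows "span (insert v B) = V"
proof
  show "span (insert v B) \<subseteq> V"
    using assms span_superset[of B] by (intro span_minimal) auto
  show "V \<subseteq> span (insert v B)"
  proof
    fix x assume x: "x \<in> V"
    have "x - (x \<bullet> v) *\<^sub>R v \<in> span B"
      using x assms by (auto simp: subspace_diff subspace_scale inner_diff_left)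
    then have "x - (x \<bullet> v) *\<^sub>R v \<in> span (insert v B)"
      using span_mono[of B "insert v B"] by blast
    moreover have "(x \<bullet> v) *\<^sub>R v \<in> span (insert v B)"
      by (intro span_mul span_base) simp
    ultimately have "(x - (x \<bullet> v) *\<^sub>R v) + (x \<bullet> v) *\<^sub>R v \<in> span (insert v B)"
      by (rule span_add)
    then show "x \<in> span (insert v B)" by simp
  qed
qed

lemma sym_mat_orthonormal_eigenbasis:
  fixes A :: "real^'n^'n"
  assumes sym: "sym_mat A"
  shows "subspace V \<Longrightarrow> (\<forall>x\<in>V. A *v x \<in> V) \<Longrightarrow>
    \<exists>B. B \<subseteq> V \<and> finite B \<and> pairwise orthogonal B \<and>
        (\<forall>v\<in>B. norm v = 1 \<and> A *v v = (v \<bullet> (A *v v)) *\<^sub>R v) \<and> span B = V"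
proof (induction "dim V" arbitrary: V rule: less_induct)
  case less
  note sub = less.prems(1) and inv = less.prems(2)
  show ?case
  proof (cases "V = {0}")
    case True then show ?thesis by (intro exI[of _ "{}"]) auto
  next
    case False
    obtain v where vV: "v \<in> V" and nv: "norm v = 1" and Av: "A *v v = (v \<bullet> (A *v v)) *\<^sub>R v"
      using sym_mat_invariant_subspace_eigenvector[OF sym sub inv False] by blast
    have vv: "v \<bullet> v = 1" using nv by (simp add: norm_eq_1)
    define V' where "V' = {u \<in> V. u \<bullet> v = 0}"
    have sub': "subspace V'" using sub unfolding V'_def subspace_def
      by (auto simp: inner_add_left)
    have inv': "\<forall>x\<in>V'. A *v x \<in> V'"
    proof
      fix x assume x: "x \<in> V'"
      have "(A *v x) \<bullet> v = x \<bullet> (A *v v)" by (simp add: sym_mat_inner_commute[OF sym])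
      also have "\<dots> = 0" using x unfolding V'_def by (subst Av) simp
      finally show "A *v x \<in> V'" using x inv unfolding V'_def by auto
    qed
    have "v \<notin> V'" using vv unfolding V'_def by auto
    then have "V' \<subset> V" using vV unfolding V'_def by blast
    then have "dim V' < dim V" using sub sub' by (metis dim_psubset span_eq_iff)
    from less.hyps[OF this sub' inv'] obtain B' where B':
      "B' \<subseteq> V'" "finite B'" "pairwise orthogonal B'"
      "\<forall>v\<in>B'. norm v = 1 \<and> A *v v = (v \<bullet> (A *v v)) *\<^sub>R v" "span B' = V'" by blast
    show ?thesis
    proof (intro exI[of _ "insert v B'"] conjI)
      show "insert v B' \<subseteq> V" "finite (insert v B')" using B'(1,2) vV unfolding V'_def by auto
      show "pairwise orthogonal (insert v B')"
        using B'(1,3) unfolding pairwise_insert V'_def orthogonal_def by (auto simp: inner_commute)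
      show "\<forall>w\<in>insert v B'. norm w = 1 \<and> A *v w = (w \<bullet> (A *v w)) *\<^sub>R w"
        using B'(4) nv Av by auto
      show "span (insert v B') = V"
        using span_insert_orthogonal_complement[OF sub vV vv] B'(5) unfolding V'_def by blast
    qed
  qed
qed

lemma orthonormal_inner_sum:
  fixes B :: "(real^'n) set"
  assumes "finite B" "pairwise orthogonal B" "\<forall>v\<in>B. norm v = 1" "w \<in> B"
  shows "w \<bullet> (\<Sum>v\<in>B. c v *\<^sub>R v) = c w"
proof -
  have "w \<bullet> (\<Sum>v\<in>B. c v *\<^sub>R v) = (\<Sum>v\<in>B. c v * (w \<bullet> v))"
    by (simp add: inner_sum_right)
  also have "\<dots> = c w * (w \<bullet> w) + (\<Sum>v\<in>B-{w}. c v * (w \<bullet> v))"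
    using assms(1,4) by (simp add: sum.remove)
  also have "(\<Sum>v\<in>B-{w}. c v * (w \<bullet> v)) = 0"
    using assms(2,4) by (intro sum.neutral) (auto simp: pairwise_def orthogonal_def)
  also have "w \<bullet> w = 1" using assms(3,4) by (simp add: norm_eq_1)
  finally show ?thesis by simp
qed

lemma orthonormal_basis_expansion:
  fixes B :: "(real^'n) set"
  assumes "finite B" "pairwise orthogonal B" "\<forall>v\<in>B. norm v = 1" "span B = UNIV"
  shows "x = (\<Sum>v\<in>B. (v \<bullet> x) *\<^sub>R v)"
proof -
  define y where "y = x - (\<Sum>v\<in>B. (v \<bullet> x) *\<^sub>R v)"
  have "w \<bullet> y = 0" if "w \<in> B" for w
    using orthonormal_inner_sum[OF assms(1-3) that, of "\<lambda>v. v \<bullet> x"]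
    unfolding y_def by (simp only: inner_diff_right diff_self)
  then have "orthogonal y w" if "w \<in> B" for w
    using that unfolding orthogonal_def by (simp add: inner_commute)
  moreover have "y \<in> span B" using assms(4) by simp
  ultimately have "orthogonal y y" by (metis orthogonal_to_span)
  then show ?thesis unfolding y_def orthogonal_def by simp
qed

lemma spd_orthonormal_eigenbasis:
  fixes A :: "real^'n^'n"
  assumes "spd A"
  obtains B where "finite B" "pairwise orthogonal B" "\<forall>v\<in>B. norm v = 1" "span B = UNIV"
    "\<And>v. v \<in> B \<Longrightarrow> A *v v = (v \<bullet> (A *v v)) *\<^sub>R v" "\<And>v. v \<in> B \<Longrightarrow> v \<bullet> (A *v v) > 0"
proof -
  have "sym_mat A" using assms unfolding spd_def by simp
  from sym_mat_orthonormal_eigenbasis[OF this, of UNIV] obtain B where B: "finite B"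
      "pairwise orthogonal B" "\<forall>v\<in>B. norm v = 1 \<and> A *v v = (v \<bullet> (A *v v)) *\<^sub>R v" "span B = UNIV"
    by auto
  moreover have "v \<bullet> (A *v v) > 0" if "v \<in> B" for v
    using B(3) that assms unfolding spd_def by (metis norm_zero zero_neq_one)
  ultimately show thesis using that by blast
qed

text \<open>\<open>u = S v - \<surd>\<lambda> v\<close> satisfies \<open>S u = - \<surd>\<lambda> u\<close>, which positive semidefiniteness
  forbids unless \<open>u = 0\<close>.\<close>
lemma spsd_sqrt_eigenvector:
  fixes S :: "real^'n^'n"
  assumes S: "spsd S" "S ** S = A" and v: "A *v v = l *\<^sub>R v" and l: "l > 0"
  shows "S *v v = sqrt l *\<^sub>R v"
proof -
  define u where "u = S *v v - sqrt l *\<^sub>R v"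
  have "S *v u = A *v v - sqrt l *\<^sub>R (S *v v)" using S(2)
    by (simp add: u_def matrix_vector_mult_diff_distrib matrix_vector_mult_scaleR
        matrix_vector_mul_assoc)
  also have "\<dots> = - sqrt l *\<^sub>R u" using l
    by (simp add: u_def v scaleR_diff_right algebra_simps)
  finally have "u \<bullet> (S *v u) = - sqrt l * (u \<bullet> u)" by simp
  moreover have "u \<bullet> (S *v u) \<ge> 0" using S(1) unfolding spsd_def by simp
  ultimately have "u \<bullet> u \<le> 0" using l by (simp add: mult_le_0_iff)
  then have "u \<bullet> u = 0" using inner_ge_zero[of u] by linarith
  then show ?thesis unfolding u_def by simp
qed

lemma spd_sqrt_exists:
  fixes A :: "real^'n^'n"
  assumes "spd A"
  shows "\<exists>R. spsd R \<and> R ** R = A"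
proof -
  obtain B where B: "finite B" "pairwise orthogonal B" "\<forall>v\<in>B. norm v = 1" "span B = UNIV"
    and eig: "\<And>v. v \<in> B \<Longrightarrow> A *v v = (v \<bullet> (A *v v)) *\<^sub>R v"
    and pos: "\<And>v. v \<in> B \<Longrightarrow> v \<bullet> (A *v v) > 0"
    using spd_orthonormal_eigenbasis[OF assms] by blast
  define c where "c v = sqrt (v \<bullet> (A *v v))" for v
  define R :: "real^'n^'n" where "R = (\<chi> i j. \<Sum>v\<in>B. c v * v$i * v$j)"
  have R: "R *v x = (\<Sum>v\<in>B. (c v * (v \<bullet> x)) *\<^sub>R v)" for x
    unfolding R_def
    by (simp add: vec_eq_iff matrix_vector_mult_def inner_vec_def sum_distrib_left
        sum_distrib_right mult_ac sum.swap[of _ UNIV])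
  have "x \<bullet> (R *v y) = (R *v x) \<bullet> y" for x y
    unfolding R by (simp add: inner_sum_left inner_sum_right mult_ac inner_commute)
  moreover have "x \<bullet> (R *v x) \<ge> 0" for x
  proof -
    have "x \<bullet> (R *v x) = (\<Sum>v\<in>B. c v * (v \<bullet> x)^2)"
      unfolding R by (simp add: inner_sum_right power2_eq_square mult_ac inner_commute)
    also have "\<dots> \<ge> 0" unfolding c_def using pos by (intro sum_nonneg) (simp add: less_imp_le)
    finally show ?thesis .
  qed
  moreover have "R *v (R *v x) = A *v x" for x
  proof -
    have "A *v x = A *v (\<Sum>v\<in>B. (v \<bullet> x) *\<^sub>R v)"
      using orthonormal_basis_expansion[OF B] by simp
    also have "\<dots> = (\<Sum>v\<in>B. (v \<bullet> x) *\<^sub>R (A *v v))"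
      by (simp add: linear_sum[OF matrix_vector_mul_linear] linear_scale[OF matrix_vector_mul_linear]
          o_def)
    also have "\<dots> = (\<Sum>v\<in>B. (c v * (c v * (v \<bullet> x))) *\<^sub>R v)"
    proof (intro sum.cong refl)
      fix v assume v: "v \<in> B"
      have cc: "c v * c v = v \<bullet> (A *v v)" using pos[OF v] unfolding c_def by simp
      have "A *v v = (c v * c v) *\<^sub>R v" unfolding cc by (rule eig[OF v])
      then show "(v \<bullet> x) *\<^sub>R (A *v v) = (c v * (c v * (v \<bullet> x))) *\<^sub>R v" by (simp add: mult_ac)
    qed
    also have "\<dots> = (\<Sum>v\<in>B. (c v * (v \<bullet> (R *v x))) *\<^sub>R v)"
      by (intro sum.cong refl) (simp add: R orthonormal_inner_sum[OF B(1-3)])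
    also have "\<dots> = R *v (R *v x)" by (rule R[symmetric])
    finally show ?thesis by simp
  qed
  ultimately have "spsd R" "R ** R = A"
    unfolding spsd_def by (simp_all add: sym_matI matrix_eq flip: matrix_vector_mul_assoc)
  then show ?thesis by blast
qed

lemma spd_sqrt_unique:
  fixes A :: "real^'n^'n"
  assumes "spd A" "spsd S" "S ** S = A" "spsd T" "T ** T = A"
  shows "S = T"
proof -
  obtain B where B: "finite B" "pairwise orthogonal B" "\<forall>v\<in>B. norm v = 1" "span B = UNIV"
    and eig: "\<And>v. v \<in> B \<Longrightarrow> A *v v = (v \<bullet> (A *v v)) *\<^sub>R v"
    and pos: "\<And>v. v \<in> B \<Longrightarrow> v \<bullet> (A *v v) > 0"
    using spd_orthonormal_eigenbasis[OF assms(1)] by blast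
  have "S *v v = T *v v" if "v \<in> B" for v
    unfolding spsd_sqrt_eigenvector[OF assms(2,3) eig pos, OF that that]
      spsd_sqrt_eigenvector[OF assms(4,5) eig pos, OF that that] ..
  then have "S *v x = T *v x" for x
    using linear_eq_on_span[of "(*v) S" "(*v) T" B] B(4) by simp
  then show ?thesis by (simp add: matrix_eq)
qed

lemma sqrtm_spd:
  fixes A :: "real^'n^'n"
  assumes "spd A"
  shows "spsd (sqrtm A)" "sqrtm A ** sqrtm A = A"
proof -
  have "\<exists>!R. spsd R \<and> R ** R = A"
    using spd_sqrt_exists[OF assms] spd_sqrt_unique[OF assms] by blast
  from theI'[OF this] show "spsd (sqrtm A)" "sqrtm A ** sqrtm A = A"
    unfolding sqrtm_def by auto
qed

lemma invertible_sqrtm: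
  fixes A :: "real^'n^'n"
  assumes "spd A"
  shows "invertible (sqrtm A)"
  unfolding invertible_iff_trivial_kernel
proof safe
  fix x assume "sqrtm A *v x = 0"
  then have "A *v x = 0"
    by (metis sqrtm_spd(2)[OF assms] matrix_vector_mul_assoc matrix_vector_mult_0_right)
  then show "x = 0" using spd_invertible[OF assms] invertible_iff_trivial_kernel by blast
qed

lemma wsq_matrix_inv_eq_norm_sqrtm:
  fixes A :: "real^'n^'n"
  assumes "spd A"
  shows "wsq (matrix_inv A) b = norm (matrix_inv (sqrtm A) *v b)^2"
proof -
  let ?R = "sqrtm A"
  let ?w = "matrix_inv ?R *v b"
  have sym: "sym_mat ?R" using sqrtm_spd(1)[OF assms] unfolding spsd_def by simp
  have inv: "invertible ?R" by (rule invertible_sqrtm[OF assms])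
  have RR: "?R *v (?R *v x) = A *v x" for x
    by (simp add: matrix_vector_mul_assoc sqrtm_spd(2)[OF assms])
  have "A *v (matrix_inv ?R *v ?w) = ?R *v (?R *v (matrix_inv ?R *v ?w))" by (simp only: RR)
  also have "\<dots> = b" by (simp add: matrix_inv_cancel(1)[OF inv])
  finally have "A *v (matrix_inv ?R *v ?w) = b" .
  then have "matrix_inv A *v b = matrix_inv ?R *v ?w"
    using matrix_inv_cancel(2)[OF spd_invertible[OF assms], of "matrix_inv ?R *v ?w"] by simp
  then have "wsq (matrix_inv A) b = ?w \<bullet> ?w"
    unfolding wsq_def by (simp add: sym_mat_matrix_inv_inner_commute[OF sym inv])
  then show ?thesis by (simp add: power2_norm_eq_inner)
qed

lemma norm_whitened_add_spsd_le:
  fixes S G :: "real^'n^'n"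
  assumes "spd S" "spsd G"
  shows "norm (matrix_inv (sqrtm (S + G)) *v b) \<le> norm (matrix_inv (sqrtm S) *v b)"
  using wsq_matrix_inv_add_spsd_le[OF assms, of b]
  by (simp add: wsq_matrix_inv_eq_norm_sqrtm assms spd_add_spsd power2_le_iff_abs_le)

lemma norm_matrix_vector_le_onorm:
  fixes A R :: "real^'n^'n"
  assumes "invertible R"
  shows "norm (A *v b) \<le> onorm (\<lambda>x. (A ** R) *v x) * norm (matrix_inv R *v b)"
proof -
  have "A *v b = (A ** R) *v (matrix_inv R *v b)"
    by (simp add: matrix_inv_cancel(1)[OF assms] flip: matrix_vector_mul_assoc)
  moreover have "bounded_linear (\<lambda>x. (A ** R) *v x)"
    by (simp add: linear_conv_bounded_linear[symmetric])
  ultimately show ?thesis using onorm by metis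
qed

section \<open>Elementary and integral inequalities\<close>

lemma borel_measurable_bounded_linear_comp:
  assumes "bounded_linear L" "f \<in> borel_measurable M"
  shows "(\<lambda>x. L (f x)) \<in> borel_measurable M"
  by (rule borel_measurable_continuous_on[OF linear_continuous_on[OF assms(1)] assms(2)])

lemma abs_half_norm_sq_diff_le:
  fixes al be ga :: "'v::real_normed_vector" and C :: real
  assumes "norm be \<le> norm ga" "norm ga \<le> C * norm be"
  shows "\<bar>1/2 * norm al^2 - 1/2 * norm be^2\<bar> \<le>
     1/2 * (norm (ga - al) * (norm al + C * norm be) + (norm ga^2 - norm be^2))"
proof -
  have "norm al^2 - norm ga^2 = (norm al - norm ga) * (norm al + norm ga)"
    by (simp add: power2_eq_square algebra_simps)
  then have "\<bar>norm al^2 - norm ga^2\<bar> = \<bar>norm al - norm ga\<bar> * (norm al + norm ga)"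
    by (simp add: abs_mult)
  also have "\<dots> \<le> norm (ga - al) * (norm al + C * norm be)"
    using norm_triangle_ineq3[of ga al] assms(2) by (intro mult_mono) auto
  finally have "\<bar>norm al^2 - norm ga^2\<bar> \<le> norm (ga - al) * (norm al + C * norm be)" .
  moreover have "norm be^2 \<le> norm ga^2" using assms(1) by (intro power_mono) auto
  ultimately show ?thesis by argo
qed

lemma exp_minus_diff_le:
  fixes s t :: real
  assumes "0 \<le> s"
  shows "exp (- s) - exp (- t) \<le> \<bar>s - t\<bar>"
proof (cases "t \<le> s")
  case False
  have "1 - exp (s - t) \<le> t - s" using exp_ge_add_one_self[of "s - t"] by linarith
  then have "exp (- s) * (1 - exp (s - t)) \<le> 1 * (t - s)"
    using assms False by (intro mult_mono) auto
  then show ?thesis using False by (simp add: algebra_simps flip: exp_add)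
next
  case True
  then have "exp (- s) \<le> exp (- t)" by simp
  then show ?thesis using True by linarith
qed

lemma Cauchy_Schwarz_integral:
  fixes f g :: "'a \<Rightarrow> real"
  assumes [measurable]: "f \<in> borel_measurable M" "g \<in> borel_measurable M"
    and nonneg: "\<And>x. x \<in> space M \<Longrightarrow> 0 \<le> f x" "\<And>x. x \<in> space M \<Longrightarrow> 0 \<le> g x"
    and sq: "integrable M (\<lambda>x. f x^2)" "integrable M (\<lambda>x. g x^2)"
  shows "integrable M (\<lambda>x. f x * g x)"
    "(\<integral>x. f x * g x \<partial>M) \<le> sqrt (\<integral>x. f x^2 \<partial>M) * sqrt (\<integral>x. g x^2 \<partial>M)"
proof -
  have bound: "\<bar>f x * g x\<bar> \<le> f x^2 + g x^2" for x
  proof -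
    have "2 * \<bar>f x * g x\<bar> \<le> f x^2 + g x^2"
      using sum_squares_bound[of "\<bar>f x\<bar>" "\<bar>g x\<bar>"] by (simp add: abs_mult mult.assoc)
    then show ?thesis by linarith
  qed
  show fg: "integrable M (\<lambda>x. f x * g x)"
  proof (rule Bochner_Integration.integrable_bound[of _ "\<lambda>x. f x^2 + g x^2"])
    show "AE x in M. norm (f x * g x) \<le> norm (f x^2 + g x^2)"
      using bound by (intro AE_I2) simp
  qed (use sq in simp_all)
  have nn: "(\<integral>\<^sup>+x. ennreal (h x) \<partial>M) = ennreal (\<integral>x. h x \<partial>M)"
    if "integrable M h" "\<And>x. x \<in> space M \<Longrightarrow> 0 \<le> h x" for h
    using that by (intro nn_integral_eq_integral) auto
  have "(\<integral>\<^sup>+x. ennreal (f x) * ennreal (g x) \<partial>M) = (\<integral>\<^sup>+x. ennreal (f x * g x) \<partial>M)"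
    using nonneg by (intro nn_integral_cong) (simp add: ennreal_mult)
  also have "\<dots> = ennreal (\<integral>x. f x * g x \<partial>M)"
    using nonneg by (intro nn[OF fg]) simp
  finally have "ennreal ((\<integral>x. f x * g x \<partial>M)^2) = (\<integral>\<^sup>+x. ennreal (f x) * ennreal (g x) \<partial>M)^2"
    using nonneg by (simp add: ennreal_power integral_nonneg_AE)
  also have "\<dots> \<le> (\<integral>\<^sup>+x. ennreal (f x)^2 \<partial>M) * (\<integral>\<^sup>+x. ennreal (g x)^2 \<partial>M)"
    by (rule Cauchy_Schwarz_nn_integral) measurable
  also have "\<dots> = ennreal ((\<integral>x. f x^2 \<partial>M) * (\<integral>x. g x^2 \<partial>M))"
  proof -
    have "(\<integral>\<^sup>+x. ennreal (h x)^2 \<partial>M) = ennreal (\<integral>x. h x^2 \<partial>M)"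
      if "integrable M (\<lambda>x. h x^2)" "\<And>x. x \<in> space M \<Longrightarrow> 0 \<le> h x" for h
    proof -
      have "(\<integral>\<^sup>+x. ennreal (h x)^2 \<partial>M) = (\<integral>\<^sup>+x. ennreal (h x^2) \<partial>M)"
        using that(2) by (intro nn_integral_cong) (simp add: ennreal_power)
      then show ?thesis using that by (simp add: nn)
    qed
    then show ?thesis using sq nonneg by (simp add: ennreal_mult integral_nonneg_AE)
  qed
  finally have "(\<integral>x. f x * g x \<partial>M)^2 \<le> (\<integral>x. f x^2 \<partial>M) * (\<integral>x. g x^2 \<partial>M)"
    by (simp add: ennreal_le_iff integral_nonneg_AE)
  then show "(\<integral>x. f x * g x \<partial>M) \<le> sqrt (\<integral>x. f x^2 \<partial>M) * sqrt (\<integral>x. g x^2 \<partial>M)"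
    by (simp add: real_le_rsqrt flip: real_sqrt_mult)
qed

lemma integrable_norm_diff_sq:
  fixes f g :: "'a \<Rightarrow> 'v::euclidean_space"
  assumes [measurable]: "f \<in> borel_measurable M" "g \<in> borel_measurable M"
    and int: "integrable M (\<lambda>x. norm (f x)^2)" "integrable M (\<lambda>x. norm (g x)^2)"
  shows "integrable M (\<lambda>x. norm (f x - g x)^2)"
proof (rule Bochner_Integration.integrable_bound[of _ "\<lambda>x. 2 * norm (f x)^2 + 2 * norm (g x)^2"])
  show "AE x in M. norm (norm (f x - g x)^2) \<le> norm (2 * norm (f x)^2 + 2 * norm (g x)^2)"
  proof (rule AE_I2)
    fix x
    have "norm (f x - g x)^2 \<le> (norm (f x) + norm (g x))^2"
      by (intro power_mono norm_triangle_ineq4) simp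
    also have "\<dots> \<le> 2 * norm (f x)^2 + 2 * norm (g x)^2"
      using sum_squares_bound[of "norm (f x)" "norm (g x)"] by (simp add: power2_sum)
    finally show "norm (norm (f x - g x)^2) \<le> norm (2 * norm (f x)^2 + 2 * norm (g x)^2)"
      by simp
  qed
qed (use int in simp_all)

lemma (in prob_space) exp_minus_integral_le:
  fixes \<Phi> :: "'a \<Rightarrow> real"
  assumes "integrable M \<Phi>" and nonneg: "\<And>x. x \<in> space M \<Longrightarrow> 0 \<le> \<Phi> x"
  shows "integrable M (\<lambda>x. exp (- \<Phi> x))" "exp (- (\<integral>x. \<Phi> x \<partial>M)) \<le> (\<integral>x. exp (- \<Phi> x) \<partial>M)"
proof -
  have [measurable]: "\<Phi> \<in> borel_measurable M" using assms(1) by (rule borel_measurable_integrable)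
  show int: "integrable M (\<lambda>x. exp (- \<Phi> x))"
    by (intro integrable_const_bound[where B=1]) (auto simp: nonneg)
  show "exp (- (\<integral>x. \<Phi> x \<partial>M)) \<le> (\<integral>x. exp (- \<Phi> x) \<partial>M)"
    using jensens_inequality[of "\<lambda>x. - \<Phi> x" UNIV, OF _ _ _ int exp_convex] assms(1) by simp
qed

section \<open>Kullback--Leibler divergence of Gibbs reweightings\<close>

lemma absolutely_continuous_density_density:
  fixes f g :: "'a \<Rightarrow> real"
  assumes [measurable]: "f \<in> borel_measurable M" "g \<in> borel_measurable M"
    and g_pos: "\<And>x. 0 < g x"
  shows "absolutely_continuous (density M (\<lambda>x. ennreal (g x))) (density M (\<lambda>x. ennreal (f x)))"
  unfolding absolutely_continuous_def
proof
  fix A assume "A \<in> null_sets (density M (\<lambda>x. ennreal (g x)))"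
  then have A: "A \<in> sets M" "AE x in M. x \<in> A \<longrightarrow> ennreal (g x) = 0"
    by (simp_all add: null_sets_density_iff)
  from A(2) have "AE x in M. x \<in> A \<longrightarrow> ennreal (f x) = 0"
  proof eventually_elim
    case (elim x)
    then show ?case using g_pos[of x] by auto
  qed
  then show "A \<in> null_sets (density M (\<lambda>x. ennreal (f x)))"
    using A(1) by (simp add: null_sets_density_iff)
qed

lemma AE_RN_deriv_density_density:
  fixes f g :: "'a \<Rightarrow> real"
  assumes [measurable]: "f \<in> borel_measurable M" "g \<in> borel_measurable M"
    and f_nonneg: "\<And>x. 0 \<le> f x" and g_pos: "\<And>x. 0 < g x" and int_g: "integrable M g"
  shows "AE x in M. RN_deriv (density M (\<lambda>x. ennreal (g x))) (density M (\<lambda>x. ennreal (f x))) x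
    = ennreal (f x / g x)"
proof -
  define N2 where "N2 = density M (\<lambda>x. ennreal (g x))"
  have g_nz: "g x \<noteq> 0" for x using g_pos[of x] by simp
  have "emeasure N2 (space N2) = ennreal (\<integral>x. g x \<partial>M)"
    using int_g g_pos unfolding N2_def
    by (simp add: emeasure_density nn_integral_eq_integral less_imp_le)
  then interpret N2: finite_measure N2 by (intro finite_measureI) simp
  have "density N2 (\<lambda>x. ennreal (f x / g x)) = density M (\<lambda>x. ennreal (g x) * ennreal (f x / g x))"
    unfolding N2_def by (rule density_density_eq) simp_all
  also have "\<dots> = density M (\<lambda>x. ennreal (f x))"
    using f_nonneg g_pos
    by (intro density_cong AE_I2) (simp_all add: less_imp_le g_nz flip: ennreal_mult)
  finally have "AE x in N2. ennreal (f x / g x) = RN_deriv N2 (density M (\<lambda>x. ennreal (f x))) x"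
    by (intro N2.RN_deriv_unique) (simp_all add: N2_def)
  then show ?thesis
    using g_pos unfolding N2_def by (subst (asm) AE_density) (auto elim: eventually_mono)
qed

lemma d_KL_density_density:
  fixes f g :: "'a \<Rightarrow> real"
  assumes [measurable]: "f \<in> borel_measurable M" "g \<in> borel_measurable M"
    and f_pos: "\<And>x. 0 < f x" and g_pos: "\<And>x. 0 < g x"
    and int_g: "integrable M g" and int_log: "integrable M (\<lambda>x. f x * ln (f x / g x))"
  shows "d_KL (density M (\<lambda>x. ennreal (f x))) (density M (\<lambda>x. ennreal (g x)))
    = ereal (\<integral>x. f x * ln (f x / g x) \<partial>M)"
proof -
  define N1 where "N1 = density M (\<lambda>x. ennreal (f x))"
  define N2 where "N2 = density M (\<lambda>x. ennreal (g x))"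
  have sets: "sets N1 = sets M" "sets N2 = sets M" by (simp_all add: N1_def N2_def)
  have "AE x in M. ln (enn2real (RN_deriv N2 N1 x)) = ln (f x / g x)"
    using AE_RN_deriv_density_density[of f M g] f_pos g_pos int_g
    unfolding N1_def N2_def by (auto simp: less_imp_le elim: eventually_mono)
  then have AE_RN: "AE x in N1. ln (enn2real (RN_deriv N2 N1 x)) = ln (f x / g x)"
    unfolding N1_def by (subst AE_density) (auto elim: eventually_mono)
  have int_N1: "integrable N1 (\<lambda>x. ln (f x / g x))"
    unfolding N1_def using int_log f_pos by (subst integrable_density) (simp_all add: less_imp_le)
  have meas_N1: "borel_measurable N1 = borel_measurable M"
    by (rule measurable_cong_sets[OF sets(1) refl])
  have [measurable]: "RN_deriv N2 N1 \<in> borel_measurable M"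
    using borel_measurable_RN_deriv[of N2 N1] measurable_cong_sets[OF sets(2) refl] by blast
  have "(\<integral>x. ln (enn2real (RN_deriv N2 N1 x)) \<partial>N1) = (\<integral>x. ln (f x / g x) \<partial>N1)"
    using AE_RN by (intro integral_cong_AE) (simp_all add: meas_N1)
  also have "\<dots> = (\<integral>x. f x * ln (f x / g x) \<partial>M)"
    unfolding N1_def using f_pos by (subst integral_density) (simp_all add: less_imp_le)
  finally show ?thesis
    using absolutely_continuous_density_density[of f M g] g_pos sets int_N1 AE_RN
    unfolding d_KL_def N1_def[symmetric] N2_def[symmetric]
    by (subst (asm) integrable_cong_AE[where g="\<lambda>x. ln (enn2real (RN_deriv N2 N1 x))"])
      (simp_all add: meas_N1 eq_commute)
qed

lemma (in prob_space) ln_normalizer_ratio_le: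
  fixes \<Phi>1 \<Phi>2 :: "'a \<Rightarrow> real"
  assumes int: "integrable M \<Phi>1" "integrable M \<Phi>2"
    and nonneg: "\<And>x. x \<in> space M \<Longrightarrow> 0 \<le> \<Phi>1 x" "\<And>x. x \<in> space M \<Longrightarrow> 0 \<le> \<Phi>2 x"
  shows "ln ((\<integral>x. exp (- \<Phi>2 x) \<partial>M) / (\<integral>x. exp (- \<Phi>1 x) \<partial>M))
    \<le> (\<integral>x. \<bar>\<Phi>1 x - \<Phi>2 x\<bar> \<partial>M) / (\<integral>x. exp (- \<Phi>1 x) \<partial>M)"
proof -
  have [measurable]: "\<Phi>1 \<in> borel_measurable M" "\<Phi>2 \<in> borel_measurable M"
    using int by (simp_all add: borel_measurable_integrable)
  define Z1 where "Z1 = (\<integral>x. exp (- \<Phi>1 x) \<partial>M)"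
  define Z2 where "Z2 = (\<integral>x. exp (- \<Phi>2 x) \<partial>M)"
  note Z1 = exp_minus_integral_le[OF int(1) nonneg(1), folded Z1_def]
  note Z2 = exp_minus_integral_le[OF int(2) nonneg(2), folded Z2_def]
  have Z_pos: "0 < Z1" "0 < Z2" using Z1(2) Z2(2) by (auto intro: less_le_trans[OF exp_gt_zero])
  have "Z2 - Z1 = (\<integral>x. exp (- \<Phi>2 x) - exp (- \<Phi>1 x) \<partial>M)"
    using Z1(1) Z2(1) by (simp add: Z1_def Z2_def)
  also have "\<dots> \<le> (\<integral>x. \<bar>\<Phi>1 x - \<Phi>2 x\<bar> \<partial>M)"
    using Z1(1) Z2(1) int exp_minus_diff_le[OF nonneg(2), of _ "\<Phi>1 _"]
    by (intro integral_mono) (auto simp: abs_minus_commute)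
  finally have "(Z2 - Z1) / Z1 \<le> (\<integral>x. \<bar>\<Phi>1 x - \<Phi>2 x\<bar> \<partial>M) / Z1"
    using Z_pos by (intro divide_right_mono) auto
  moreover have "ln (Z2 / Z1) \<le> Z2 / Z1 - 1" using Z_pos by (intro ln_le_minus_one) simp
  ultimately show ?thesis using Z_pos by (simp add: diff_divide_distrib flip: Z1_def Z2_def)
qed

lemma (in prob_space) d_KL_reweight:
  fixes \<Phi>1 \<Phi>2 :: "'a \<Rightarrow> real"
  assumes int: "integrable M \<Phi>1" "integrable M \<Phi>2"
    and nonneg: "\<And>x. x \<in> space M \<Longrightarrow> 0 \<le> \<Phi>1 x" "\<And>x. x \<in> space M \<Longrightarrow> 0 \<le> \<Phi>2 x"
  defines "Z1 \<equiv> \<integral>x. exp (- \<Phi>1 x) \<partial>M" and "Z2 \<equiv> \<integral>x. exp (- \<Phi>2 x) \<partial>M"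
  shows "integrable M (\<lambda>x. exp (- \<Phi>1 x) / Z1 * (\<Phi>2 x - \<Phi>1 x + ln (Z2 / Z1)))"
    and "d_KL (reweight M \<Phi>1) (reweight M \<Phi>2)
      = ereal (\<integral>x. exp (- \<Phi>1 x) / Z1 * (\<Phi>2 x - \<Phi>1 x + ln (Z2 / Z1)) \<partial>M)"
proof -
  have [measurable]: "\<Phi>1 \<in> borel_measurable M" "\<Phi>2 \<in> borel_measurable M"
    using int by (simp_all add: borel_measurable_integrable)
  note Z1 = exp_minus_integral_le[OF int(1) nonneg(1), folded Z1_def]
  note Z2 = exp_minus_integral_le[OF int(2) nonneg(2), folded Z2_def]
  have Z_pos: "0 < Z1" "0 < Z2" using Z1(2) Z2(2) by (auto intro: less_le_trans[OF exp_gt_zero])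
  define r1 where "r1 x = exp (- \<Phi>1 x) / Z1" for x
  define r2 where "r2 x = exp (- \<Phi>2 x) / Z2" for x
  define c where "c = ln (Z2 / Z1)"
  have r_pos: "0 < r1 x" "0 < r2 x" for x using Z_pos by (simp_all add: r1_def r2_def)
  have log_ratio: "ln (r1 x / r2 x) = \<Phi>2 x - \<Phi>1 x + c" for x
    using Z_pos by (simp add: r1_def r2_def c_def ln_div ln_mult exp_minus field_simps)
  have int_log: "integrable M (\<lambda>x. r1 x * ln (r1 x / r2 x))"
  proof (rule Bochner_Integration.integrable_bound[of _ "\<lambda>x. (\<Phi>1 x + \<Phi>2 x + \<bar>c\<bar>) / Z1"])
    show "AE x in M. norm (r1 x * ln (r1 x / r2 x)) \<le> norm ((\<Phi>1 x + \<Phi>2 x + \<bar>c\<bar>) / Z1)"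
    proof (rule AE_I2)
      fix x assume x: "x \<in> space M"
      have "r1 x \<le> 1 / Z1" using Z_pos nonneg(1)[OF x] by (simp add: r1_def divide_right_mono)
      moreover have "\<bar>ln (r1 x / r2 x)\<bar> \<le> \<Phi>1 x + \<Phi>2 x + \<bar>c\<bar>"
        using nonneg[OF x] by (simp add: log_ratio)
      ultimately have "r1 x * \<bar>ln (r1 x / r2 x)\<bar> \<le> 1 / Z1 * (\<Phi>1 x + \<Phi>2 x + \<bar>c\<bar>)"
        using r_pos(1)[of x] Z_pos by (intro mult_mono) auto
      then show "norm (r1 x * ln (r1 x / r2 x)) \<le> norm ((\<Phi>1 x + \<Phi>2 x + \<bar>c\<bar>) / Z1)"
        using r_pos(1)[of x] Z_pos nonneg[OF x] by (simp add: abs_mult)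
    qed
  qed (use int in \<open>simp_all add: r1_def r2_def\<close>)
  have "d_KL (reweight M \<Phi>1) (reweight M \<Phi>2) = ereal (\<integral>x. r1 x * ln (r1 x / r2 x) \<partial>M)"
    unfolding reweight_def r1_def[abs_def] r2_def[abs_def] Z1_def[symmetric] Z2_def[symmetric]
    using int_log Z2(1) r_pos
    by (intro d_KL_density_density) (simp_all add: r1_def r2_def Z2_def)
  with int_log show "integrable M (\<lambda>x. exp (- \<Phi>1 x) / Z1 * (\<Phi>2 x - \<Phi>1 x + ln (Z2 / Z1)))"
    and "d_KL (reweight M \<Phi>1) (reweight M \<Phi>2)
      = ereal (\<integral>x. exp (- \<Phi>1 x) / Z1 * (\<Phi>2 x - \<Phi>1 x + ln (Z2 / Z1)) \<partial>M)"
    by (simp_all add: log_ratio) (simp_all add: r1_def c_def)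
qed

text \<open>Both parts of the log-density ratio contribute at most \<open>\<integral>|\<Phi>\<^sub>1 - \<Phi>\<^sub>2| / Z\<^sub>1\<close>, and
  \<open>1/Z\<^sub>1 \<le> exp (\<integral>\<Phi>\<^sub>1)\<close> by Jensen.\<close>
lemma (in prob_space) d_KL_reweight_le:
  fixes \<Phi>1 \<Phi>2 :: "'a \<Rightarrow> real"
  assumes int: "integrable M \<Phi>1" "integrable M \<Phi>2"
    and nonneg: "\<And>x. x \<in> space M \<Longrightarrow> 0 \<le> \<Phi>1 x" "\<And>x. x \<in> space M \<Longrightarrow> 0 \<le> \<Phi>2 x"
  shows "d_KL (reweight M \<Phi>1) (reweight M \<Phi>2)
     \<le> ereal (2 * exp (\<integral>x. \<Phi>1 x \<partial>M) * (\<integral>x. \<bar>\<Phi>1 x - \<Phi>2 x\<bar> \<partial>M))"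
proof -
  define Z1 where "Z1 = (\<integral>x. exp (- \<Phi>1 x) \<partial>M)"
  define Z2 where "Z2 = (\<integral>x. exp (- \<Phi>2 x) \<partial>M)"
  define I where "I = (\<integral>x. \<bar>\<Phi>1 x - \<Phi>2 x\<bar> \<partial>M)"
  define c where "c = ln (Z2 / Z1)"
  define r1 where "r1 x = exp (- \<Phi>1 x) / Z1" for x
  note Z1 = exp_minus_integral_le[OF int(1) nonneg(1), folded Z1_def]
  have Z_pos: "0 < Z1" using Z1(2) by (auto intro: less_le_trans[OF exp_gt_zero])
  note KL = d_KL_reweight[OF int nonneg, folded Z1_def Z2_def c_def r1_def]
  have int_r1: "integrable M r1" using Z1(1) by (simp add: r1_def[abs_def])
  have "r1 x * (\<Phi>2 x - \<Phi>1 x + c) \<le> \<bar>\<Phi>1 x - \<Phi>2 x\<bar> / Z1 + c * r1 x" if "x \<in> space M" for x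
  proof -
    have "r1 x * (\<Phi>2 x - \<Phi>1 x) \<le> r1 x * \<bar>\<Phi>1 x - \<Phi>2 x\<bar>"
      using Z_pos by (intro mult_left_mono) (auto simp: r1_def)
    also have "\<dots> \<le> 1 / Z1 * \<bar>\<Phi>1 x - \<Phi>2 x\<bar>"
      using Z_pos nonneg(1)[OF that] by (intro mult_right_mono) (auto simp: r1_def divide_right_mono)
    finally show ?thesis by (simp add: algebra_simps)
  qed
  then have "(\<integral>x. r1 x * (\<Phi>2 x - \<Phi>1 x + c) \<partial>M) \<le> (\<integral>x. \<bar>\<Phi>1 x - \<Phi>2 x\<bar> / Z1 + c * r1 x \<partial>M)"
    using int int_r1 KL(1) by (intro integral_mono) auto
  also have "\<dots> = I / Z1 + c * (\<integral>x. r1 x \<partial>M)"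
    using int int_r1 by (simp add: I_def)
  also have "\<dots> \<le> I / Z1 + I / Z1"
  proof -
    have "(\<integral>x. r1 x \<partial>M) = 1" using Z_pos by (simp add: r1_def Z1_def)
    moreover have "c \<le> I / Z1"
      unfolding c_def I_def Z1_def Z2_def by (rule ln_normalizer_ratio_le[OF int nonneg])
    ultimately show ?thesis by simp
  qed
  also have "I / Z1 + I / Z1 \<le> 2 * exp (\<integral>x. \<Phi>1 x \<partial>M) * I"
  proof -
    have "1 / Z1 \<le> exp (\<integral>x. \<Phi>1 x \<partial>M)" using Z1(2) Z_pos by (simp add: field_simps exp_minus)
    then have "1 / Z1 * I \<le> exp (\<integral>x. \<Phi>1 x \<partial>M) * I" by (rule mult_right_mono) (simp add: I_def)
    then show ?thesis by simp
  qed
  finally show ?thesis using KL(2) by (simp add: I_def)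
qed

lemma (in prob_space) max_d_KL_reweight_le:
  fixes \<Phi>1 \<Phi>2 :: "'a \<Rightarrow> real"
  assumes int: "integrable M \<Phi>1" "integrable M \<Phi>2"
    and nonneg: "\<And>x. x \<in> space M \<Longrightarrow> 0 \<le> \<Phi>1 x" "\<And>x. x \<in> space M \<Longrightarrow> 0 \<le> \<Phi>2 x"
  shows "max (d_KL (reweight M \<Phi>1) (reweight M \<Phi>2)) (d_KL (reweight M \<Phi>2) (reweight M \<Phi>1))
     \<le> ereal (2 * exp ((\<integral>x. \<Phi>1 x \<partial>M) + (\<integral>x. \<Phi>2 x \<partial>M)) * (\<integral>x. \<bar>\<Phi>1 x - \<Phi>2 x\<bar> \<partial>M))"
proof -
  define I where "I = (\<integral>x. \<bar>\<Phi>1 x - \<Phi>2 x\<bar> \<partial>M)"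
  define S where "S = (\<integral>x. \<Phi>1 x \<partial>M) + (\<integral>x. \<Phi>2 x \<partial>M)"
  have "0 \<le> (\<integral>x. \<Phi>1 x \<partial>M)" "0 \<le> (\<integral>x. \<Phi>2 x \<partial>M)" "0 \<le> I"
    using nonneg by (simp_all add: I_def integral_nonneg_AE)
  then have le_S: "2 * exp s * I \<le> 2 * exp S * I"
    if "s = (\<integral>x. \<Phi>1 x \<partial>M) \<or> s = (\<integral>x. \<Phi>2 x \<partial>M)" for s
    using that unfolding S_def by (intro mult_right_mono) auto
  have "d_KL (reweight M \<Phi>1) (reweight M \<Phi>2) \<le> ereal (2 * exp (\<integral>x. \<Phi>1 x \<partial>M) * I)"
    unfolding I_def by (rule d_KL_reweight_le[OF int nonneg])
  also have "\<dots> \<le> ereal (2 * exp S * I)" using le_S by simp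
  finally have KL12: "d_KL (reweight M \<Phi>1) (reweight M \<Phi>2) \<le> ereal (2 * exp S * I)" .
  have "d_KL (reweight M \<Phi>2) (reweight M \<Phi>1) \<le> ereal (2 * exp (\<integral>x. \<Phi>2 x \<partial>M) * I)"
    using d_KL_reweight_le[OF int(2,1) nonneg(2,1)] by (simp add: I_def abs_minus_commute)
  also have "\<dots> \<le> ereal (2 * exp S * I)" using le_S by simp
  finally show ?thesis using KL12 unfolding S_def I_def by simp
qed

lemma integral_abs_half_norm_sq_diff_le:
  fixes al be ga :: "'a \<Rightarrow> 'v::euclidean_space"
  assumes [measurable]: "al \<in> borel_measurable M" "be \<in> borel_measurable M" "ga \<in> borel_measurable M"
    and be_le: "\<And>x. x \<in> space M \<Longrightarrow> norm (be x) \<le> norm (ga x)"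
    and ga_le: "\<And>x. x \<in> space M \<Longrightarrow> norm (ga x) \<le> C * norm (be x)" and "0 \<le> C"
    and int: "integrable M (\<lambda>x. norm (al x)^2)" "integrable M (\<lambda>x. norm (be x)^2)"
  shows "2 * (\<integral>x. \<bar>1/2 * norm (al x)^2 - 1/2 * norm (be x)^2\<bar> \<partial>M)
    \<le> sqrt (\<integral>x. norm (ga x - al x)^2 \<partial>M)
        * (sqrt 2 * (sqrt (\<integral>x. 1/2 * norm (al x)^2 \<partial>M) + C * sqrt (\<integral>x. 1/2 * norm (be x)^2 \<partial>M)))
      + (\<integral>x. norm (ga x)^2 - norm (be x)^2 \<partial>M)"
proof -
  define D where "D = (\<integral>x. norm (ga x - al x)^2 \<partial>M)"
  have int_ga: "integrable M (\<lambda>x. norm (ga x)^2)"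
  proof (rule Bochner_Integration.integrable_bound[of _ "\<lambda>x. C^2 * norm (be x)^2"])
    show "AE x in M. norm (norm (ga x)^2) \<le> norm (C^2 * norm (be x)^2)"
      using ga_le by (intro AE_I2) (simp add: power_mono flip: power_mult_distrib)
  qed (use int in simp_all)
  have int_diff: "integrable M (\<lambda>x. norm (ga x - al x)^2)"
    by (rule integrable_norm_diff_sq[OF _ _ int_ga int(1)]) measurable
  note CS_al = Cauchy_Schwarz_integral[of "\<lambda>x. norm (ga x - al x)" M "\<lambda>x. norm (al x)"]
  note CS_be = Cauchy_Schwarz_integral[of "\<lambda>x. norm (ga x - al x)" M "\<lambda>x. norm (be x)"]
  have "(\<integral>x. \<bar>1/2 * norm (al x)^2 - 1/2 * norm (be x)^2\<bar> \<partial>M)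
      \<le> (\<integral>x. 1/2 * (norm (ga x - al x) * norm (al x) + C * (norm (ga x - al x) * norm (be x))
                     + (norm (ga x)^2 - norm (be x)^2)) \<partial>M)"
    using abs_half_norm_sq_diff_le[OF be_le ga_le] int int_ga int_diff CS_al CS_be
    by (intro integral_mono) (simp_all add: algebra_simps)
  also have "\<dots> = 1/2 * ((\<integral>x. norm (ga x - al x) * norm (al x) \<partial>M)
                 + C * (\<integral>x. norm (ga x - al x) * norm (be x) \<partial>M)
                 + (\<integral>x. norm (ga x)^2 - norm (be x)^2 \<partial>M))"
    using int int_ga int_diff CS_al CS_be by simp
  also have "\<dots> \<le> 1/2 * (sqrt D * sqrt (\<integral>x. norm (al x)^2 \<partial>M)
                 + C * (sqrt D * sqrt (\<integral>x. norm (be x)^2 \<partial>M))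
                 + (\<integral>x. norm (ga x)^2 - norm (be x)^2 \<partial>M))"
    using int int_diff CS_al CS_be \<open>0 \<le> C\<close> unfolding D_def
    by (intro mult_left_mono add_mono mult_left_mono) simp_all
  finally show ?thesis
    by (simp add: D_def real_sqrt_mult algebra_simps flip: real_sqrt_mult)
qed

lemma (in prob_space) max_d_KL_reweight_half_norm_sq_le:
  fixes al be ga :: "'a \<Rightarrow> 'v::euclidean_space"
  assumes meas: "al \<in> borel_measurable M" "be \<in> borel_measurable M" "ga \<in> borel_measurable M"
    and be_le: "\<And>x. x \<in> space M \<Longrightarrow> norm (be x) \<le> norm (ga x)"
    and ga_le: "\<And>x. x \<in> space M \<Longrightarrow> norm (ga x) \<le> C * norm (be x)" and "0 \<le> C"
    and int: "integrable M (\<lambda>x. norm (al x)^2)" "integrable M (\<lambda>x. norm (be x)^2)"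
  defines "A \<equiv> \<integral>x. 1/2 * norm (al x)^2 \<partial>M" and "B \<equiv> \<integral>x. 1/2 * norm (be x)^2 \<partial>M"
    and "D \<equiv> \<integral>x. norm (ga x - al x)^2 \<partial>M" and "W \<equiv> \<integral>x. norm (ga x)^2 - norm (be x)^2 \<partial>M"
  shows "max (d_KL (reweight M (\<lambda>x. 1/2 * norm (al x)^2)) (reweight M (\<lambda>x. 1/2 * norm (be x)^2)))
             (d_KL (reweight M (\<lambda>x. 1/2 * norm (be x)^2)) (reweight M (\<lambda>x. 1/2 * norm (al x)^2)))
    \<le> ereal (exp (2 * A + 2 * B) * max (sqrt 2 * (sqrt A + C * sqrt B)) 1 * (sqrt D + W))"
proof -
  define S where "S = sqrt 2 * (sqrt A + C * sqrt B)"
  define I where "I = (\<integral>x. \<bar>1/2 * norm (al x)^2 - 1/2 * norm (be x)^2\<bar> \<partial>M)"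
  have "0 \<le> A" "0 \<le> B" "0 \<le> D" "0 \<le> W"
    using be_le by (simp_all add: A_def B_def D_def W_def integral_nonneg_AE power_mono)
  have "max (d_KL (reweight M (\<lambda>x. 1/2 * norm (al x)^2)) (reweight M (\<lambda>x. 1/2 * norm (be x)^2)))
            (d_KL (reweight M (\<lambda>x. 1/2 * norm (be x)^2)) (reweight M (\<lambda>x. 1/2 * norm (al x)^2)))
      \<le> ereal (2 * exp (A + B) * I)"
    unfolding A_def B_def I_def using int by (intro max_d_KL_reweight_le) simp_all
  also have "2 * exp (A + B) * I \<le> exp (2 * A + 2 * B) * max S 1 * (sqrt D + W)"
  proof -
    have "2 * I \<le> sqrt D * S + W"
      using integral_abs_half_norm_sq_diff_le[OF meas be_le ga_le \<open>0 \<le> C\<close> int]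
      unfolding I_def S_def A_def B_def D_def W_def .
    also have "\<dots> \<le> max S 1 * (sqrt D + W)"
    proof -
      have "sqrt D * S \<le> sqrt D * max S 1" using \<open>0 \<le> D\<close> by (intro mult_left_mono) auto
      moreover have "W \<le> max S 1 * W"
        using \<open>0 \<le> W\<close> by (simp add: le_max_iff_disj mult_le_cancel_right1)
      ultimately show ?thesis by (simp add: algebra_simps)
    qed
    finally have "exp (A + B) * (2 * I) \<le> exp (A + B) * (max S 1 * (sqrt D + W))" by simp
    also have "\<dots> \<le> exp (2 * A + 2 * B) * (max S 1 * (sqrt D + W))"
      using \<open>0 \<le> A\<close> \<open>0 \<le> B\<close> \<open>0 \<le> D\<close> \<open>0 \<le> W\<close>
      by (intro mult_right_mono mult_nonneg_nonneg) auto
    finally show ?thesis by (simp add: mult.assoc)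
  qed
  finally show ?thesis unfolding S_def by simp
qed

theorem mainTheorem4:
  fixes \<Theta> :: "'t::{banach, second_countable_topology} set"
    and \<mu> :: "'t measure"
    and Obs :: "'u::banach \<Rightarrow> real^'n"
    and Mdag M :: "'t \<Rightarrow> 'u"
    and m_E :: 'u
    and \<Sigma>\<epsilon> \<Gamma>E :: "real^'n^'n"
    and y :: "real^'n"
    and \<Phi>dag \<Phi>enh :: "'t \<Rightarrow> real"
    and C_enh C :: real
  assumes \<Theta>_borel: "\<Theta> \<in> sets borel"
    and \<mu>_sets: "sets \<mu> = sets (restrict_space borel \<Theta>)"
    and \<mu>_prob: "prob_space \<mu>"
    and Obs_lin: "bounded_linear Obs"
    and Mdag_meas: "Mdag \<in> borel_measurable \<mu>"
    and M_meas: "M \<in> borel_measurable \<mu>"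
    and \<Sigma>_spd: "spd \<Sigma>\<epsilon>"
    and \<Gamma>_spsd: "spsd \<Gamma>E"
    and \<Phi>dag_def: "\<Phi>dag = (\<lambda>t. 1/2 * wsq (matrix_inv \<Sigma>\<epsilon>) (y - Obs (Mdag t)))"
    and \<Phi>enh_def: "\<Phi>enh = (\<lambda>t. 1/2 * wsq (matrix_inv (\<Sigma>\<epsilon> + \<Gamma>E)) (y - Obs (M t) - Obs m_E))"
    and C_enh_def: "C_enh = onorm (\<lambda>x. (matrix_inv (sqrtm \<Sigma>\<epsilon>) ** sqrtm (\<Sigma>\<epsilon> + \<Gamma>E)) *v x)"
    and int_dag: "integrable \<mu> \<Phi>dag"
    and int_enh: "integrable \<mu> \<Phi>enh"
    and C_def: "C = exp (2 * L1norm \<mu> \<Phi>dag + 2 * L1norm \<mu> \<Phi>enh) *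
                   max (sqrt 2 * (sqrt (L1norm \<mu> \<Phi>dag) + C_enh * sqrt (L1norm \<mu> \<Phi>enh))) 1"
  shows "max (d_KL (reweight \<mu> \<Phi>dag) (reweight \<mu> \<Phi>enh))
             (d_KL (reweight \<mu> \<Phi>enh) (reweight \<mu> \<Phi>dag))
         \<le> ereal (C * (sqrt (L1norm \<mu> (\<lambda>t. wsq (matrix_inv \<Sigma>\<epsilon>) (Obs ((Mdag t - M t) - m_E))))
                      + L1norm \<mu> (\<lambda>t. wsq_diff (matrix_inv \<Sigma>\<epsilon>) (matrix_inv (\<Sigma>\<epsilon> + \<Gamma>E))
                                              (y - Obs (M t) - Obs m_E))))"
proof -
  interpret prob_space \<mu> by (rule \<mu>_prob)
  have SG: "spd (\<Sigma>\<epsilon> + \<Gamma>E)" by (rule spd_add_spsd[OF \<Sigma>_spd \<Gamma>_spsd])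
  define W1 where "W1 = matrix_inv (sqrtm \<Sigma>\<epsilon>)"
  define W2 where "W2 = matrix_inv (sqrtm (\<Sigma>\<epsilon> + \<Gamma>E))"
  define b where "b t = y - Obs (M t) - Obs m_E" for t
  define al where "al t = W1 *v (y - Obs (Mdag t))" for t
  define be where "be t = W2 *v b t" for t
  define ga where "ga t = W1 *v b t" for t
  note whiten = wsq_matrix_inv_eq_norm_sqrtm[OF \<Sigma>_spd, folded W1_def]
    wsq_matrix_inv_eq_norm_sqrtm[OF SG, folded W2_def]
  have \<Phi>dag_eq: "\<Phi>dag = (\<lambda>t. 1/2 * norm (al t)^2)" by (simp add: \<Phi>dag_def al_def whiten)
  have \<Phi>enh_eq: "\<Phi>enh = (\<lambda>t. 1/2 * norm (be t)^2)" by (simp add: \<Phi>enh_def be_def b_def whiten)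
  have be_le: "norm (be t) \<le> norm (ga t)" for t
    unfolding be_def ga_def W1_def W2_def by (rule norm_whitened_add_spsd_le[OF \<Sigma>_spd \<Gamma>_spsd])
  have ga_le: "norm (ga t) \<le> C_enh * norm (be t)" for t
    unfolding be_def ga_def W1_def W2_def C_enh_def
    by (rule norm_matrix_vector_le_onorm[OF invertible_sqrtm[OF SG]])
  have "0 \<le> C_enh"
    unfolding C_enh_def by (rule onorm_pos_le) (simp add: linear_conv_bounded_linear[symmetric])
  have [measurable]: "(\<lambda>t. Obs (Mdag t)) \<in> borel_measurable \<mu>" "(\<lambda>t. Obs (M t)) \<in> borel_measurable \<mu>"
    using borel_measurable_bounded_linear_comp[OF Obs_lin] Mdag_meas M_meas by blast+
  have meas: "al \<in> borel_measurable \<mu>" "be \<in> borel_measurable \<mu>" "ga \<in> borel_measurable \<mu>"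
    unfolding al_def[abs_def] be_def[abs_def] ga_def[abs_def] b_def
    by (rule borel_measurable_bounded_linear_comp[OF matrix_vector_mul_bounded_linear]; measurable)+
  have int: "integrable \<mu> (\<lambda>t. norm (al t)^2)" "integrable \<mu> (\<lambda>t. norm (be t)^2)"
    using int_dag int_enh unfolding \<Phi>dag_eq \<Phi>enh_eq
    by (subst (asm) (1 2) integrable_mult_left_iff, simp)+
  have "L1norm \<mu> \<Phi>dag = (\<integral>t. 1/2 * norm (al t)^2 \<partial>\<mu>)"
    "L1norm \<mu> \<Phi>enh = (\<integral>t. 1/2 * norm (be t)^2 \<partial>\<mu>)"
    by (simp_all add: L1norm_def \<Phi>dag_eq \<Phi>enh_eq)
  moreover have "L1norm \<mu> (\<lambda>t. wsq (matrix_inv \<Sigma>\<epsilon>) (Obs ((Mdag t - M t) - m_E)))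
      = (\<integral>t. norm (ga t - al t)^2 \<partial>\<mu>)"
    using Obs_lin by (simp add: L1norm_def whiten ga_def al_def b_def linear_simps
        matrix_vector_mult_diff_distrib algebra_simps)
  moreover have "L1norm \<mu> (\<lambda>t. wsq_diff (matrix_inv \<Sigma>\<epsilon>) (matrix_inv (\<Sigma>\<epsilon> + \<Gamma>E)) (y - Obs (M t) - Obs m_E))
      = (\<integral>t. norm (ga t)^2 - norm (be t)^2 \<partial>\<mu>)"
  proof -
    have "wsq_diff (matrix_inv \<Sigma>\<epsilon>) (matrix_inv (\<Sigma>\<epsilon> + \<Gamma>E)) (b t) = norm (ga t)^2 - norm (be t)^2" for t
      using whiten unfolding wsq_def by (simp add: wsq_diff_def ga_def be_def)
    then show ?thesis using be_le by (simp add: L1norm_def b_def power_mono)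
  qed
  ultimately show ?thesis
    using max_d_KL_reweight_half_norm_sq_le[OF meas be_le ga_le \<open>0 \<le> C_enh\<close> int]
    unfolding C_def \<Phi>dag_eq[symmetric] \<Phi>enh_eq[symmetric] by (simp add: mult.assoc)
qed

end
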